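(* Let $G$ be a split VPT graph with split partition $(S,K)$ such that $|N(v)\cap S|\leq 2$ for every $v\in K$, and let $n\geq 4$. If the branch graph $B(G/K)$ contains an induced cycle $C_n$, then $G$ contains an induced $n$-sun $S_n$.
   Context: All graphs are finite, simple and connected. A graph is split if its vertex set partitions into a stable set $S$ and a clique (maximal complete set) $K$. VPT graphs are vertex-intersection graphs of paths in a tree. For $n\geq 4$, the $n$-sun $S_n$ is the split graph with stable set $\{s_1,\dots,s_n\}$, central clique $\{v_1,\dots,v_n\}$, $N(s_i)=\{v_i,v_{i+1}\}$ for $1\le i\le n-1$ and $N(s_n)=\{v_n,v_1\}$. For a clique $C$ of $G$, the branch graph $B(G/C)$ has vertex set the vertices of $V(G)\setminus C$ adjacent to some vertex of $C$, two such vertices $v,w$ being adjacent iff (1) $vw\notin E(G)$; (2) some vertex of $C$ is adjacent to both; (3) there exist $v',w'\in C$ with $v'$ adjacent to $v$ but not $w$, and $w'$ adjacent to $w$ but not $v$. *)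

theory Defs
  imports Main
begin

definition simple_graph :: "'a set \<Rightarrow> ('a \<Rightarrow> 'a \<Rightarrow> bool) \<Rightarrow> bool" where
  "simple_graph V E \<longleftrightarrow> finite V \<and> (\<forall>u v. E u v \<longrightarrow> u \<in> V \<and> v \<in> V)
     \<and> (\<forall>u v. E u v \<longrightarrow> E v u) \<and> (\<forall>v. \<not> E v v)"

definition connected_graph :: "'a set \<Rightarrow> ('a \<Rightarrow> 'a \<Rightarrow> bool) \<Rightarrow> bool" where
  "connected_graph V E \<longleftrightarrow> V \<noteq> {} \<and> (\<forall>u\<in>V. \<forall>v\<in>V. E\<^sup>*\<^sup>* u v)"

definition nbhd :: "('a \<Rightarrow> 'a \<Rightarrow> bool) \<Rightarrow> 'a \<Rightarrow> 'a set" where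
  "nbhd E v = {u. E v u}"

definition is_path :: "'a set \<Rightarrow> ('a \<Rightarrow> 'a \<Rightarrow> bool) \<Rightarrow> 'a list \<Rightarrow> bool" where
  "is_path V E ps \<longleftrightarrow> ps \<noteq> [] \<and> distinct ps \<and> set ps \<subseteq> V
     \<and> (\<forall>i. Suc i < length ps \<longrightarrow> E (ps ! i) (ps ! Suc i))"

definition has_cycle :: "'a set \<Rightarrow> ('a \<Rightarrow> 'a \<Rightarrow> bool) \<Rightarrow> bool" where
  "has_cycle V E \<longleftrightarrow> (\<exists>cs. length cs \<ge> 3 \<and> is_path V E cs \<and> E (last cs) (hd cs))"

definition is_tree :: "'a set \<Rightarrow> ('a \<Rightarrow> 'a \<Rightarrow> bool) \<Rightarrow> bool" where
  "is_tree V E \<longleftrightarrow> simple_graph V E \<and> connected_graph V E \<and> \<not> has_cycle V E"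

text \<open>VPT graph: vertex-intersection graph of paths in a tree (host tree vertices taken
  in nat, w.l.o.g. since every finite tree is isomorphic to one on nat).\<close>
definition VPT :: "'a set \<Rightarrow> ('a \<Rightarrow> 'a \<Rightarrow> bool) \<Rightarrow> bool" where
  "VPT V E \<longleftrightarrow> (\<exists>(T :: nat set) ET (P :: 'a \<Rightarrow> nat set). is_tree T ET
     \<and> (\<forall>v\<in>V. \<exists>ps. is_path T ET ps \<and> P v = set ps)
     \<and> (\<forall>u\<in>V. \<forall>v\<in>V. u \<noteq> v \<longrightarrow> (E u v \<longleftrightarrow> P u \<inter> P v \<noteq> {})))"

definition complete_set :: "('a \<Rightarrow> 'a \<Rightarrow> bool) \<Rightarrow> 'a set \<Rightarrow> bool" where
  "complete_set E C \<longleftrightarrow> (\<forall>u\<in>C. \<forall>v\<in>C. u \<noteq> v \<longrightarrow> E u v)"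

definition is_clique :: "'a set \<Rightarrow> ('a \<Rightarrow> 'a \<Rightarrow> bool) \<Rightarrow> 'a set \<Rightarrow> bool" where
  "is_clique V E C \<longleftrightarrow> C \<subseteq> V \<and> complete_set E C
     \<and> (\<forall>D. C \<subset> D \<and> D \<subseteq> V \<longrightarrow> \<not> complete_set E D)"

definition stable_set :: "'a set \<Rightarrow> ('a \<Rightarrow> 'a \<Rightarrow> bool) \<Rightarrow> 'a set \<Rightarrow> bool" where
  "stable_set V E S \<longleftrightarrow> S \<subseteq> V \<and> (\<forall>u\<in>S. \<forall>v\<in>S. \<not> E u v)"

definition split_partition :: "'a set \<Rightarrow> ('a \<Rightarrow> 'a \<Rightarrow> bool) \<Rightarrow> 'a set \<Rightarrow> 'a set \<Rightarrow> bool" where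
  "split_partition V E S K \<longleftrightarrow> S \<inter> K = {} \<and> S \<union> K = V
     \<and> stable_set V E S \<and> is_clique V E K"

definition branch_vertices :: "'a set \<Rightarrow> ('a \<Rightarrow> 'a \<Rightarrow> bool) \<Rightarrow> 'a set \<Rightarrow> 'a set" where
  "branch_vertices V E C = {v \<in> V - C. \<exists>c\<in>C. E v c}"

definition branch_adj :: "('a \<Rightarrow> 'a \<Rightarrow> bool) \<Rightarrow> 'a set \<Rightarrow> 'a \<Rightarrow> 'a \<Rightarrow> bool" where
  "branch_adj E C v w \<longleftrightarrow> \<not> E v w \<and> (\<exists>c\<in>C. E c v \<and> E c w)
     \<and> (\<exists>v'\<in>C. \<exists>w'\<in>C. E v' v \<and> \<not> E v' w \<and> E w' w \<and> \<not> E w' v)"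

definition has_induced_cycle :: "'a set \<Rightarrow> ('a \<Rightarrow> 'a \<Rightarrow> bool) \<Rightarrow> nat \<Rightarrow> bool" where
  "has_induced_cycle V E n \<longleftrightarrow> (\<exists>x. inj_on x {..<n} \<and> x ` {..<n} \<subseteq> V
     \<and> (\<forall>i<n. \<forall>j<n. E (x i) (x j) \<longleftrightarrow> (j = Suc i mod n \<or> i = Suc j mod n)))"

definition has_induced_sun :: "'a set \<Rightarrow> ('a \<Rightarrow> 'a \<Rightarrow> bool) \<Rightarrow> nat \<Rightarrow> bool" where
  "has_induced_sun V E n \<longleftrightarrow> (\<exists>s v. inj_on s {..<n} \<and> inj_on v {..<n}
     \<and> s ` {..<n} \<subseteq> V \<and> v ` {..<n} \<subseteq> V \<and> s ` {..<n} \<inter> v ` {..<n} = {}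
     \<and> (\<forall>i<n. \<forall>j<n. \<not> E (s i) (s j))
     \<and> (\<forall>i<n. \<forall>j<n. i \<noteq> j \<longrightarrow> E (v i) (v j))
     \<and> (\<forall>i<n. \<forall>j<n. E (s i) (v j) \<longleftrightarrow> (j = i \<or> j = Suc i mod n)))"

end

theory Submission
  imports Defs
begin

(* Let x_0, ..., x_{n-1} be an induced cycle of the branch graph B(G/K).
   Its vertices lie outside K and see K, hence lie in the stable set S.  For each
   edge x_j x_{j+1} of the cycle, the definition of branch adjacency provides a
   vertex c_j of K adjacent to both ends.  Since c_j has at most two neighbours in S,
   its S-neighbourhood is exactly {x_j, x_{j+1}}; so x_i ~ c_j iff i = j or i = j+1
   (indices mod n).  For n >= 3 this pattern forces the c_j to be distinct, and then
   s_i = x_{i+1}, v_i = c_i is an induced n-sun, K being complete and S stable. *)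

lemma cyc_succ_eq: "i < (n::nat) \<Longrightarrow> Suc i mod n = (if Suc i = n then 0 else Suc i)"
  by (cases "Suc i = n") auto

lemma cyc_succ_inj: "i < (n::nat) \<Longrightarrow> j < n \<Longrightarrow> Suc i mod n = Suc j mod n \<Longrightarrow> i = j"
  by (cases "Suc i = n"; cases "Suc j = n") (simp_all add: cyc_succ_eq)

lemma cyc_succ_neq: "i < (n::nat) \<Longrightarrow> 2 \<le> n \<Longrightarrow> Suc i mod n \<noteq> i"
  by (cases "Suc i = n") (simp_all add: cyc_succ_eq)

lemma cyc_succ_not_mutual:
  assumes "i < (n::nat)" "j < n" "3 \<le> n" "i = Suc j mod n" "j = Suc i mod n"
  shows False
proof (cases "Suc j = n")
  case True
  then have "i = 0" using assms(4) by simp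
  then show False using assms(3,5) True by simp
next
  case False
  then have "i = Suc j" using assms(2,4) cyc_succ_eq by simp
  then show False using assms(1,3,5) cyc_succ_eq[OF assms(1)] by (simp split: if_splits)
qed

lemma induced_sun_from_witnesses:
  assumes split: "split_partition V E S K" and n: "3 \<le> n"
    and x_inj: "inj_on x {..<n}" and xS: "x ` {..<n} \<subseteq> S" and cK: "c ` {..<n} \<subseteq> K"
    and pattern: "\<forall>i<n. \<forall>j<n. E (x i) (c j) \<longleftrightarrow> (i = j \<or> i = Suc j mod n)"
  shows "has_induced_sun V E n"
proof -
  have disj: "S \<inter> K = {}" and SV: "S \<subseteq> V" and KV: "K \<subseteq> V"
    and stable: "\<And>u v. u \<in> S \<Longrightarrow> v \<in> S \<Longrightarrow> \<not> E u v" and complete: "complete_set E K"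
    using split unfolding split_partition_def stable_set_def is_clique_def by auto
  have succ_lt: "\<And>i. Suc i mod n < n" using n by simp
  have c_inj: "inj_on c {..<n}"
  proof (rule inj_onI, rule ccontr)
    fix i j assume i: "i \<in> {..<n}" and j: "j \<in> {..<n}" and eq: "c i = c j" and "i \<noteq> j"
    have "E (x i) (c i)" and "E (x j) (c j)" using pattern i j by auto
    then have "E (x i) (c j)" and "E (x j) (c i)" using eq by simp_all
    then have "i = Suc j mod n" and "j = Suc i mod n"
      using pattern i j \<open>i \<noteq> j\<close> by auto
    then show False using cyc_succ_not_mutual i j n by blast
  qed
  define s where "s i = x (Suc i mod n)" for i
  have s_inj: "inj_on s {..<n}"
  proof (rule inj_onI)
    fix i j assume "i \<in> {..<n}" "j \<in> {..<n}" "s i = s j"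
    then show "i = j"
      using inj_onD[OF x_inj] cyc_succ_inj[of i n j] succ_lt unfolding s_def by simp
  qed
  have sS: "s ` {..<n} \<subseteq> S" using xS succ_lt unfolding s_def by auto
  have s_c: "E (s i) (c j) \<longleftrightarrow> (j = i \<or> j = Suc i mod n)" if "i < n" "j < n" for i j
  proof -
    have "E (s i) (c j) \<longleftrightarrow> (Suc i mod n = j \<or> Suc i mod n = Suc j mod n)"
      using pattern that succ_lt[of i] unfolding s_def by simp
    also have "\<dots> \<longleftrightarrow> (j = i \<or> j = Suc i mod n)" using cyc_succ_inj that by auto
    finally show ?thesis .
  qed
  have c_c: "E (c i) (c j)" if "i < n" "j < n" "i \<noteq> j" for i j
  proof -
    have "c i \<noteq> c j" using inj_onD[OF c_inj] that by auto
    then show ?thesis using complete cK that unfolding complete_set_def by auto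
  qed
  have s_s: "\<not> E (s i) (s j)" if "i < n" "j < n" for i j
    using stable sS that by auto
  show ?thesis unfolding has_induced_sun_def
  proof (rule exI[of _ s], rule exI[of _ c], intro conjI allI impI)
    show "s ` {..<n} \<inter> c ` {..<n} = {}" using sS cK disj by blast
    show "s ` {..<n} \<subseteq> V" using sS SV by blast
    show "c ` {..<n} \<subseteq> V" using cK KV by blast
  qed (fact s_inj c_inj s_s c_c s_c)+
qed

lemma card_le_two_eq:
  assumes "finite A" "card A \<le> 2" "a \<in> A" "b \<in> A" "a \<noteq> b"
  shows "A = {a, b}"
  using assms card_seteq[of A "{a, b}"] by auto

lemma branch_cycle_witnesses:
  assumes graph: "simple_graph V E" and split: "split_partition V E S K"
    and deg: "\<forall>v\<in>K. card (nbhd E v \<inter> S) \<le> 2" and n: "3 \<le> n"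
    and cycle: "has_induced_cycle (branch_vertices V E K) (branch_adj E K) n"
  obtains x c where "inj_on x {..<n}" "x ` {..<n} \<subseteq> S" "c ` {..<n} \<subseteq> K"
    "\<forall>i<n. \<forall>j<n. E (x i) (c j) \<longleftrightarrow> (i = j \<or> i = Suc j mod n)"
proof -
  have finV: "finite V" and sym: "\<And>u v. E u v \<Longrightarrow> E v u"
    using graph unfolding simple_graph_def by auto
  have SK_V: "S \<union> K = V" using split unfolding split_partition_def by blast
  have finS: "finite S" using finV SK_V by (metis finite_Un)
  obtain x where x_inj: "inj_on x {..<n}" and xB: "x ` {..<n} \<subseteq> branch_vertices V E K"
    and x_adj: "\<forall>i<n. \<forall>j<n. branch_adj E K (x i) (x j) \<longleftrightarrow> (j = Suc i mod n \<or> i = Suc j mod n)"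
    using cycle unfolding has_induced_cycle_def by blast
  have xS: "x ` {..<n} \<subseteq> S"
    using xB SK_V unfolding branch_vertices_def by blast
  have "\<forall>j<n. \<exists>c\<in>K. E c (x j) \<and> E c (x (Suc j mod n))"
  proof (intro allI impI)
    fix j assume "j < n"
    then have "branch_adj E K (x j) (x (Suc j mod n))" using x_adj n by simp
    then show "\<exists>c\<in>K. E c (x j) \<and> E c (x (Suc j mod n))" unfolding branch_adj_def by blast
  qed
  then obtain c where cK: "\<And>j. j < n \<Longrightarrow> c j \<in> K"
    and c_edge: "\<And>j. j < n \<Longrightarrow> E (c j) (x j) \<and> E (c j) (x (Suc j mod n))"
    by metis
  have nbhd_c: "nbhd E (c j) \<inter> S = {x j, x (Suc j mod n)}" if j: "j < n" for j
  proof (rule card_le_two_eq)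
    have succ_j: "Suc j mod n < n" using j by simp
    show "finite (nbhd E (c j) \<inter> S)" using finS by simp
    show "card (nbhd E (c j) \<inter> S) \<le> 2" using deg cK[OF j] by blast
    show "x j \<in> nbhd E (c j) \<inter> S" "x (Suc j mod n) \<in> nbhd E (c j) \<inter> S"
      using c_edge[OF j] xS j succ_j unfolding nbhd_def by auto
    show "x j \<noteq> x (Suc j mod n)"
      using inj_on_eq_iff[OF x_inj] j succ_j cyc_succ_neq[of j n] n by simp
  qed
  have "E (x i) (c j) \<longleftrightarrow> (i = j \<or> i = Suc j mod n)" if ij: "i < n" "j < n" for i j
  proof -
    have "E (x i) (c j) \<longleftrightarrow> x i \<in> nbhd E (c j) \<inter> S"
      using sym xS ij unfolding nbhd_def by blast
    also have "\<dots> \<longleftrightarrow> x i = x j \<or> x i = x (Suc j mod n)" using nbhd_c[OF ij(2)] by auto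
    also have "\<dots> \<longleftrightarrow> (i = j \<or> i = Suc j mod n)"
      using inj_on_eq_iff[OF x_inj] ij by simp
    finally show ?thesis .
  qed
  then show thesis using that x_inj xS cK by blast
qed

theorem mainTheorem12:
  fixes V :: "'a set" and E :: "'a \<Rightarrow> 'a \<Rightarrow> bool" and S K :: "'a set" and n :: nat
  assumes "simple_graph V E" and "connected_graph V E" and "VPT V E"
    and "split_partition V E S K"
    and "\<forall>v\<in>K. card (nbhd E v \<inter> S) \<le> 2"
    and "n \<ge> 4"
    and "has_induced_cycle (branch_vertices V E K) (branch_adj E K) n"
  shows "has_induced_sun V E n"
proof -
  have n: "3 \<le> n" using \<open>n \<ge> 4\<close> by simp
  obtain x c where "inj_on x {..<n}" "x ` {..<n} \<subseteq> S" "c ` {..<n} \<subseteq> K"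
    "\<forall>i<n. \<forall>j<n. E (x i) (c j) \<longleftrightarrow> (i = j \<or> i = Suc j mod n)"
    using branch_cycle_witnesses[OF assms(1,4,5) n assms(7)] by blast
  then show ?thesis by (rule induced_sun_from_witnesses[OF assms(4) n])
qed

end
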